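(* Let $K$ be a field and $m,n,r$ positive integers. Let $R=K[x_{ij}^k \mid 1\le i\le m,\ 1\le j\le n,\ 1\le k\le r]$ and let $I_{mn}^r$ be the ideal generated by all $2$-minors of the horizontal and of the vertical concatenation of the $m\times n$ matrices $X_k=(x_{ij}^k)$, $k=1,\dots,r$. Let $M=\{1^{m-1},2^{n-1},3^{r-1}\}$ and let $S(M)$ be the set of all words (strings) containing exactly $m-1$ ones, $n-1$ twos and $r-1$ threes. Then the $h$-polynomial of $R/I_{mn}^r$ equals $\sum_{\sigma\in S(M)}t^{\operatorname{des}(\sigma)}$.
   Context: For a word $\sigma=\sigma_1\cdots\sigma_a$, a descent is an index $k$ with $\sigma_k>\sigma_{k+1}$, and $\operatorname{des}(\sigma)$ is the number of descents. The $h$-polynomial of a standard graded algebra $A$ is the numerator of its Hilbert series written in reduced form $h(t)/(1-t)^{\dim A}$. *)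

theory Defs
  imports Main "HOL-Library.Poly_Mapping" "HOL-Computational_Algebra.Formal_Power_Series"
begin

type_synonym var = "nat \<times> nat \<times> nat"
type_synonym 'k mpoly = "(var \<Rightarrow>\<^sub>0 nat) \<Rightarrow>\<^sub>0 'k"

definition Var :: "nat \<Rightarrow> nat \<Rightarrow> nat \<Rightarrow> 'k::field mpoly" where
  "Var i j k = Poly_Mapping.single (Poly_Mapping.single (i, j, k) 1) 1"

definition vars_set :: "nat \<Rightarrow> nat \<Rightarrow> nat \<Rightarrow> var set" where
  "vars_set m n r = {1..m} \<times> {1..n} \<times> {1..r}"

definition mdeg :: "(var \<Rightarrow>\<^sub>0 nat) \<Rightarrow> nat" where
  "mdeg \<alpha> = (\<Sum>v\<in>Poly_Mapping.keys \<alpha>. Poly_Mapping.lookup \<alpha> v)"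

definition polyring :: "nat \<Rightarrow> nat \<Rightarrow> nat \<Rightarrow> 'k::field mpoly set" where
  "polyring m n r = {p. \<forall>\<alpha>\<in>Poly_Mapping.keys p. Poly_Mapping.keys \<alpha> \<subseteq> vars_set m n r}"

definition homog :: "nat \<Rightarrow> nat \<Rightarrow> nat \<Rightarrow> nat \<Rightarrow> 'k::field mpoly set" where
  "homog m n r d = {p \<in> polyring m n r. \<forall>\<alpha>\<in>Poly_Mapping.keys p. mdeg \<alpha> = d}"

text \<open>2-minors of the horizontal concatenation (X_1 ... X_r) (an m x nr matrix; rows i,
  columns (k,j)) and of the vertical concatenation (an mr x n matrix; rows (k,i), columns j).\<close>
definition minors_gens :: "nat \<Rightarrow> nat \<Rightarrow> nat \<Rightarrow> 'k::field mpoly set" where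
  "minors_gens m n r =
     {Var i j k * Var i' j' k' - Var i j' k' * Var i' j k | i i' j j' k k'.
        i \<in> {1..m} \<and> i' \<in> {1..m} \<and> j \<in> {1..n} \<and> j' \<in> {1..n} \<and> k \<in> {1..r} \<and> k' \<in> {1..r}}
   \<union> {Var i j k * Var i' j' k' - Var i j' k * Var i' j k' | i i' j j' k k'.
        i \<in> {1..m} \<and> i' \<in> {1..m} \<and> j \<in> {1..n} \<and> j' \<in> {1..n} \<and> k \<in> {1..r} \<and> k' \<in> {1..r}}"

definition ideal_gen :: "'k::field mpoly set \<Rightarrow> 'k mpoly set \<Rightarrow> 'k mpoly set" where
  "ideal_gen Rs G = {\<Sum>g\<in>G. c g * g | c. \<forall>g\<in>G. c g \<in> Rs}"

definition Imnr :: "nat \<Rightarrow> nat \<Rightarrow> nat \<Rightarrow> 'k::field mpoly set" where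
  "Imnr m n r = ideal_gen (polyring m n r) (minors_gens m n r)"

definition kscale :: "'k::field \<Rightarrow> 'k mpoly \<Rightarrow> 'k mpoly" where
  "kscale c p = Poly_Mapping.single 0 c * p"

definition kdim :: "'k::field mpoly set \<Rightarrow> nat" where
  "kdim V = vector_space.dim kscale V"

definition hilbert_fun :: "nat \<Rightarrow> nat \<Rightarrow> nat \<Rightarrow> 'k::field itself \<Rightarrow> nat \<Rightarrow> nat" where
  "hilbert_fun m n r _ d =
     kdim (homog m n r d :: 'k mpoly set) - kdim (Imnr m n r \<inter> homog m n r d :: 'k mpoly set)"

definition hilbert_series :: "nat \<Rightarrow> nat \<Rightarrow> nat \<Rightarrow> 'k::field itself \<Rightarrow> int fps" where
  "hilbert_series m n r K = Abs_fps (\<lambda>d. int (hilbert_fun m n r K d))"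

definition des :: "nat list \<Rightarrow> nat" where
  "des \<sigma> = card {k. Suc k < length \<sigma> \<and> \<sigma> ! k > \<sigma> ! Suc k}"

definition words_SM :: "nat \<Rightarrow> nat \<Rightarrow> nat \<Rightarrow> nat list set" where
  "words_SM m n r = {\<sigma>. set \<sigma> \<subseteq> {1,2,3} \<and> count_list \<sigma> 1 = m - 1
                          \<and> count_list \<sigma> 2 = n - 1 \<and> count_list \<sigma> 3 = r - 1}"

definition descent_poly :: "nat \<Rightarrow> nat \<Rightarrow> nat \<Rightarrow> int fps" where
  "descent_poly m n r = Abs_fps (\<lambda>d. int (card {\<sigma> \<in> words_SM m n r. des \<sigma> = d}))"

end

theory Submission
  imports Defs "HOL-Library.Multiset"
begin

text \<open>
  Call the content of a monomial the triple of multisets of row indices i, column indices j and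
  matrix indices k of its variables x_ij^k. Every generator of I is a difference of two monomials
  of equal content; conversely any two monomials of equal content are connected by a chain of such
  exchanges, and summing the coefficients over one content class is a linear form vanishing on I.
  So monomials are congruent modulo I exactly when their contents agree, and the Hilbert function
  of R/I in degree d counts the contents of degree d:
  H(d) = C(m-1+d, d) C(n-1+d, d) C(r-1+d, d).
  This product also counts the (d+1)-tuples of weakly increasing words whose concatenation lies
  in S(M). Grouping them by the concatenation s, the number of ways to cut s into d+1 weakly
  increasing blocks has generating function t^des(s) / (1-t)^(|s|+1), and multiplying by
  (1-t)^(m+n+r-2) gives the descent polynomial.
\<close>

section \<open>Polynomials as a vector space\<close>

type_synonym exponent = "var \<Rightarrow>\<^sub>0 nat"

lemma lookup_kscale [simp]: "Poly_Mapping.lookup (kscale c p) \<alpha> = c * Poly_Mapping.lookup p \<alpha>"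
  by (simp add: kscale_def flip: mult_map_scale_conv_mult) (simp add: Poly_Mapping.map.rep_eq when_def)

interpretation poly_vs: vector_space "kscale :: 'k::field \<Rightarrow> 'k mpoly \<Rightarrow> 'k mpoly"
  by unfold_locales (simp_all add: poly_mapping_eq_iff lookup_add algebra_simps fun_eq_iff)

lemma kdim_eq_dim: "kdim = poly_vs.dim"
  by (simp add: kdim_def fun_eq_iff)

definition monomial :: "exponent \<Rightarrow> 'k::field mpoly" where
  "monomial \<alpha> = Poly_Mapping.single \<alpha> 1"

lemma lookup_monomial: "Poly_Mapping.lookup (monomial \<alpha>) \<beta> = (if \<alpha> = \<beta> then 1 else 0)"
  by (simp add: monomial_def lookup_single when_def)

lemma monomial_mult: "monomial \<alpha> * monomial \<beta> = monomial (\<alpha> + \<beta>)"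
  by (simp add: monomial_def mult_single)

lemma kscale_monomial: "kscale c (monomial \<alpha>) = Poly_Mapping.single \<alpha> c"
  by (simp add: kscale_def monomial_def mult_single)

lemma inj_monomial: "inj monomial"
  by (rule injI) (metis lookup_monomial one_neq_zero)

lemma poly_eq_sum_monomials:
  "p = (\<Sum>\<alpha>\<in>Poly_Mapping.keys p. kscale (Poly_Mapping.lookup p \<alpha>) (monomial \<alpha>))"
  by (rule poly_mapping_eqI) (simp add: kscale_monomial lookup_sum lookup_single when_def in_keys_iff)

lemma independent_monomials:
  assumes "finite A"
  shows "poly_vs.independent (monomial ` A :: 'k::field mpoly set)"
proof (rule poly_vs.independent_if_scalars_zero)
  show "finite (monomial ` A :: 'k mpoly set)"
    using assms by simp
  fix f :: "'k mpoly \<Rightarrow> 'k" and x :: "'k mpoly"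
  assume zero: "(\<Sum>x\<in>monomial ` A. kscale (f x) x) = 0" and "x \<in> monomial ` A"
  then obtain \<alpha> where \<alpha>: "\<alpha> \<in> A" "x = monomial \<alpha>"
    by blast
  have "0 = Poly_Mapping.lookup (\<Sum>x\<in>monomial ` A. kscale (f x) x) \<alpha>"
    using zero by simp
  also have "\<dots> = (\<Sum>\<beta>\<in>A. if \<beta> = \<alpha> then f (monomial \<beta>) else 0)"
    by (simp add: lookup_sum sum.reindex[OF inj_on_subset[OF inj_monomial subset_UNIV]]
        lookup_monomial if_distrib cong: if_cong)
  also have "\<dots> = f x"
    using \<alpha> assms by simp
  finally show "f x = 0" ..
qed

definition balanced_polys :: "exponent set \<Rightarrow> (exponent \<Rightarrow> 'c) \<Rightarrow> 'k::field mpoly set"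
  where "balanced_polys A cl =
    {p. Poly_Mapping.keys p \<subseteq> A \<and> (\<forall>\<alpha>\<in>A. (\<Sum>\<beta>\<in>{\<beta>\<in>A. cl \<beta> = cl \<alpha>}. Poly_Mapping.lookup p \<beta>) = 0)}"

lemma subspace_balanced_polys: "poly_vs.subspace (balanced_polys A cl)"
proof (rule poly_vs.subspaceI)
  fix p q :: "'k::field mpoly"
  assume "p \<in> balanced_polys A cl" "q \<in> balanced_polys A cl"
  then show "p + q \<in> balanced_polys A cl"
    using keys_add[of p q] by (auto simp: balanced_polys_def lookup_add sum.distrib)
next
  fix c and p :: "'k::field mpoly"
  assume "p \<in> balanced_polys A cl"
  then show "kscale c p \<in> balanced_polys A cl"
    by (auto simp: balanced_polys_def in_keys_iff simp flip: sum_distrib_left)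
qed (simp add: balanced_polys_def)

definition fibre_rep :: "exponent set \<Rightarrow> (exponent \<Rightarrow> 'c) \<Rightarrow> exponent \<Rightarrow> exponent"
  where "fibre_rep A cl \<alpha> = inv_into A cl (cl \<alpha>)"

lemma fibre_rep_in: "\<alpha> \<in> A \<Longrightarrow> fibre_rep A cl \<alpha> \<in> A"
  by (simp add: fibre_rep_def inv_into_into)

lemma fibre_rep_same_fibre: "\<alpha> \<in> A \<Longrightarrow> cl (fibre_rep A cl \<alpha>) = cl \<alpha>"
  by (simp add: fibre_rep_def f_inv_into_f)

lemma fibre_rep_unique:
  assumes "\<beta> \<in> fibre_rep A cl ` A" "\<gamma> \<in> fibre_rep A cl ` A" "cl \<beta> = cl \<gamma>"
  shows "\<beta> = \<gamma>"
  using assms by (auto simp: fibre_rep_def f_inv_into_f)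

lemma card_fibre_reps: "card (fibre_rep A cl ` A) = card (cl ` A)"
proof -
  have "fibre_rep A cl ` A = inv_into A cl ` cl ` A"
    by (simp add: fibre_rep_def image_image)
  then show ?thesis
    by (simp add: card_image inj_on_inv_into)
qed

definition fibre_diff :: "exponent set \<Rightarrow> (exponent \<Rightarrow> 'c) \<Rightarrow> exponent \<Rightarrow> 'k::field mpoly"
  where "fibre_diff A cl \<alpha> = monomial \<alpha> - monomial (fibre_rep A cl \<alpha>)"

lemma lookup_fibre_diff:
  "Poly_Mapping.lookup (fibre_diff A cl \<alpha>) \<gamma> =
     (if \<alpha> = \<gamma> then 1 else 0) - (if fibre_rep A cl \<alpha> = \<gamma> then 1 else 0)"
  by (simp add: fibre_diff_def lookup_minus lookup_monomial)

lemma lookup_fibre_diff_nonrep: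
  assumes "\<alpha> \<in> A - fibre_rep A cl ` A" "\<gamma> \<notin> fibre_rep A cl ` A"
  shows "Poly_Mapping.lookup (fibre_diff A cl \<alpha>) \<gamma> = (if \<alpha> = \<gamma> then 1 else 0)"
  using assms by (auto simp: lookup_fibre_diff)

lemma inj_on_fibre_diff: "inj_on (fibre_diff A cl :: _ \<Rightarrow> 'k::field mpoly) (A - fibre_rep A cl ` A)"
proof (rule inj_onI)
  fix \<alpha> \<beta> assume \<alpha>: "\<alpha> \<in> A - fibre_rep A cl ` A" and \<beta>: "\<beta> \<in> A - fibre_rep A cl ` A"
    and eq: "(fibre_diff A cl \<alpha> :: 'k mpoly) = fibre_diff A cl \<beta>"
  have "Poly_Mapping.lookup (fibre_diff A cl \<alpha> :: 'k mpoly) \<alpha> = Poly_Mapping.lookup (fibre_diff A cl \<beta> :: 'k mpoly) \<alpha>"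
    by (simp add: eq)
  moreover have "Poly_Mapping.lookup (fibre_diff A cl \<alpha> :: 'k mpoly) \<alpha> = 1"
    using lookup_fibre_diff_nonrep[OF \<alpha>, of \<alpha>] \<alpha> by simp
  moreover have "Poly_Mapping.lookup (fibre_diff A cl \<beta> :: 'k mpoly) \<alpha> = (if \<beta> = \<alpha> then 1 else 0)"
    using lookup_fibre_diff_nonrep[OF \<beta>, of \<alpha>] \<alpha> by simp
  ultimately show "\<alpha> = \<beta>"
    by (metis one_neq_zero)
qed

lemma fibre_diff_balanced:
  assumes "finite A" "\<alpha> \<in> A"
  shows "(fibre_diff A cl \<alpha> :: 'k::field mpoly) \<in> balanced_polys A cl"
proof -
  let ?\<rho> = "fibre_rep A cl \<alpha>"
  have fibre_sum: "(\<Sum>\<beta>\<in>{\<beta>\<in>A. cl \<beta> = c}. Poly_Mapping.lookup (monomial \<gamma> :: 'k mpoly) \<beta>) =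
      (if cl \<gamma> = c then 1 else 0)" if "\<gamma> \<in> A" for \<gamma> c
    using that assms(1) by (simp add: lookup_monomial)
  have "Poly_Mapping.keys (fibre_diff A cl \<alpha> :: 'k mpoly) \<subseteq> {\<alpha>, ?\<rho>}"
    using keys_diff[of "monomial \<alpha> :: 'k mpoly" "monomial ?\<rho>"] by (simp add: fibre_diff_def monomial_def insert_commute)
  moreover have "?\<rho> \<in> A" "cl ?\<rho> = cl \<alpha>"
    using assms(2) by (simp_all add: fibre_rep_in fibre_rep_same_fibre)
  ultimately show ?thesis
    using assms(2) by (auto simp: balanced_polys_def fibre_diff_def lookup_minus sum_subtractf fibre_sum)
qed

lemma balanced_poly_eq_0_if_keys_reps:
  assumes "finite A" "q \<in> balanced_polys A cl" "Poly_Mapping.keys q \<subseteq> fibre_rep A cl ` A"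
  shows "q = 0"
proof (rule poly_mapping_eqI)
  fix \<gamma>
  have "Poly_Mapping.lookup q \<gamma> = 0"
  proof (cases "\<gamma> \<in> fibre_rep A cl ` A")
    case False
    then show ?thesis
      using assms(3) by (auto simp: in_keys_iff)
  next
    case \<gamma>: True
    then have "\<gamma> \<in> A"
      using fibre_rep_in by blast
    then have "0 = (\<Sum>\<beta>\<in>{\<beta>\<in>A. cl \<beta> = cl \<gamma>}. Poly_Mapping.lookup q \<beta>)"
      using assms(2) by (simp add: balanced_polys_def)
    also have "\<dots> = (\<Sum>\<beta>\<in>{\<beta>\<in>A. cl \<beta> = cl \<gamma>}. if \<beta> = \<gamma> then Poly_Mapping.lookup q \<beta> else 0)"
    proof (intro sum.cong refl)
      fix \<beta>
      assume "\<beta> \<in> {\<beta>\<in>A. cl \<beta> = cl \<gamma>}"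
      then have "\<beta> \<notin> Poly_Mapping.keys q" if "\<beta> \<noteq> \<gamma>"
        using fibre_rep_unique[OF _ \<gamma>, of \<beta>] that assms(3) by auto
      then show "Poly_Mapping.lookup q \<beta> = (if \<beta> = \<gamma> then Poly_Mapping.lookup q \<beta> else 0)"
        by (auto simp: in_keys_iff)
    qed
    also have "\<dots> = Poly_Mapping.lookup q \<gamma>"
      using \<open>\<gamma> \<in> A\<close> assms(1) by simp
    finally show ?thesis ..
  qed
  then show "Poly_Mapping.lookup q \<gamma> = Poly_Mapping.lookup 0 \<gamma>"
    by simp
qed

lemma keys_diff_sum_fibre_diffs:
  assumes "finite A" "Poly_Mapping.keys p \<subseteq> A"
  shows "Poly_Mapping.keys (p - (\<Sum>\<alpha>\<in>A - fibre_rep A cl ` A. kscale (Poly_Mapping.lookup p \<alpha>) (fibre_diff A cl \<alpha>)))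
    \<subseteq> fibre_rep A cl ` A"
    (is "Poly_Mapping.keys (p - ?p') \<subseteq> ?R")
proof
  fix \<gamma>
  assume \<gamma>: "\<gamma> \<in> Poly_Mapping.keys (p - ?p')"
  show "\<gamma> \<in> ?R"
  proof (rule ccontr)
    assume "\<gamma> \<notin> ?R"
    then have "Poly_Mapping.lookup (p - ?p') \<gamma> =
        Poly_Mapping.lookup p \<gamma> - (\<Sum>\<alpha>\<in>A - ?R. if \<alpha> = \<gamma> then Poly_Mapping.lookup p \<alpha> else 0)"
      by (simp add: lookup_minus lookup_sum, intro sum.cong refl) (simp add: lookup_fibre_diff_nonrep)
    also have "\<dots> = 0"
      using assms \<open>\<gamma> \<notin> ?R\<close> by (auto simp: in_keys_iff)
    finally show False
      using \<gamma> by (simp add: in_keys_iff)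
  qed
qed

lemma span_fibre_diffs:
  assumes "finite A"
  shows "poly_vs.span (fibre_diff A cl ` (A - fibre_rep A cl ` A)) = (balanced_polys A cl :: 'k::field mpoly set)"
proof (rule poly_vs.span_subspace)
  let ?R = "fibre_rep A cl ` A"
  show "fibre_diff A cl ` (A - ?R) \<subseteq> (balanced_polys A cl :: 'k mpoly set)"
    using fibre_diff_balanced[OF assms] by blast
  show "poly_vs.subspace (balanced_polys A cl :: 'k mpoly set)"
    by (rule subspace_balanced_polys)
  show "balanced_polys A cl \<subseteq> poly_vs.span (fibre_diff A cl ` (A - ?R) :: 'k mpoly set)"
  proof
    fix p :: "'k mpoly"
    assume p: "p \<in> balanced_polys A cl"
    let ?p' = "\<Sum>\<alpha>\<in>A - ?R. kscale (Poly_Mapping.lookup p \<alpha>) (fibre_diff A cl \<alpha>)"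
    have "p - ?p' \<in> balanced_polys A cl"
      using p fibre_diff_balanced[OF assms]
      by (intro poly_vs.subspace_diff[OF subspace_balanced_polys] poly_vs.subspace_sum[OF subspace_balanced_polys]
          poly_vs.subspace_scale[OF subspace_balanced_polys]) auto
    moreover have "Poly_Mapping.keys (p - ?p') \<subseteq> ?R"
      using p by (intro keys_diff_sum_fibre_diffs[OF assms]) (simp add: balanced_polys_def)
    ultimately have "p - ?p' = 0"
      by (rule balanced_poly_eq_0_if_keys_reps[OF assms])
    then have "p = ?p'"
      by simp
    also have "\<dots> \<in> poly_vs.span (fibre_diff A cl ` (A - ?R))"
      by (intro poly_vs.span_sum poly_vs.span_scale poly_vs.span_base) auto
    finally show "p \<in> poly_vs.span (fibre_diff A cl ` (A - ?R))" .
  qed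
qed

lemma independent_fibre_diffs:
  assumes "finite A"
  shows "poly_vs.independent (fibre_diff A cl ` (A - fibre_rep A cl ` A) :: 'k::field mpoly set)"
proof (rule poly_vs.independent_if_scalars_zero)
  let ?S = "A - fibre_rep A cl ` A"
  show "finite (fibre_diff A cl ` ?S :: 'k mpoly set)"
    using assms by simp
  fix u :: "'k mpoly \<Rightarrow> 'k" and x :: "'k mpoly"
  assume zero: "(\<Sum>x\<in>fibre_diff A cl ` ?S. kscale (u x) x) = 0" and "x \<in> fibre_diff A cl ` ?S"
  then obtain \<alpha> where \<alpha>: "\<alpha> \<in> ?S" "x = fibre_diff A cl \<alpha>"
    by blast
  have "0 = Poly_Mapping.lookup (\<Sum>x\<in>fibre_diff A cl ` ?S. kscale (u x) x) \<alpha>"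
    using zero by simp
  also have "\<dots> = (\<Sum>\<beta>\<in>?S. if \<beta> = \<alpha> then u (fibre_diff A cl \<beta>) else 0)"
    using \<alpha>(1)
    by (simp add: lookup_sum sum.reindex[OF inj_on_fibre_diff], intro sum.cong refl)
      (simp add: lookup_fibre_diff_nonrep)
  also have "\<dots> = u x"
    using \<alpha> assms by simp
  finally show "u x = 0" ..
qed

lemma dim_balanced_polys:
  assumes "finite A"
  shows "poly_vs.dim (balanced_polys A cl :: 'k::field mpoly set) = card A - card (cl ` A)"
proof -
  let ?R = "fibre_rep A cl ` A"
  have "poly_vs.dim (balanced_polys A cl :: 'k mpoly set) = card (fibre_diff A cl ` (A - ?R) :: 'k mpoly set)"
    using independent_fibre_diffs[OF assms]
    by (intro poly_vs.dim_eq_card) (simp_all add: span_fibre_diffs[OF assms, symmetric] poly_vs.span_span)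
  also have "\<dots> = card (A - ?R)"
    by (rule card_image[OF inj_on_fibre_diff])
  also have "\<dots> = card A - card (cl ` A)"
  proof -
    have "?R \<subseteq> A"
      using fibre_rep_in by blast
    then show ?thesis
      using assms by (simp add: card_Diff_subset card_fibre_reps finite_subset)
  qed
  finally show ?thesis .
qed

section \<open>The ideal of 2-minors\<close>

lemma polyring_add: "p \<in> polyring m n r \<Longrightarrow> q \<in> polyring m n r \<Longrightarrow> p + q \<in> polyring m n r"
  unfolding polyring_def using keys_add[of p q] by blast

lemma polyring_mult: "p \<in> polyring m n r \<Longrightarrow> q \<in> polyring m n r \<Longrightarrow> p * q \<in> polyring m n r"
proof -
  have "Poly_Mapping.keys (\<alpha> + \<beta>) \<subseteq> Poly_Mapping.keys \<alpha> \<union> Poly_Mapping.keys \<beta>" for \<alpha> \<beta> :: exponent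
    by (auto simp: in_keys_iff lookup_add)
  then show "p \<in> polyring m n r \<Longrightarrow> q \<in> polyring m n r \<Longrightarrow> p * q \<in> polyring m n r"
    unfolding polyring_def using keys_mult[of p q] by blast
qed

lemma polyring_monomial: "Poly_Mapping.keys \<alpha> \<subseteq> vars_set m n r \<Longrightarrow> monomial \<alpha> \<in> polyring m n r"
  by (simp add: polyring_def monomial_def)

lemma polyring_constant: "Poly_Mapping.single 0 c \<in> polyring m n r"
  by (simp add: polyring_def)

lemma polyring_zero: "0 \<in> polyring m n r" and polyring_one: "1 \<in> polyring m n r"
  by (simp_all add: polyring_def)

lemma ideal_gen_add:
  assumes "x \<in> ideal_gen (polyring m n r) G" "y \<in> ideal_gen (polyring m n r) G"
  shows "x + y \<in> ideal_gen (polyring m n r) G"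
proof -
  obtain a b where a: "\<forall>g\<in>G. a g \<in> polyring m n r" "x = (\<Sum>g\<in>G. a g * g)"
    and b: "\<forall>g\<in>G. b g \<in> polyring m n r" "y = (\<Sum>g\<in>G. b g * g)"
    using assms by (auto simp: ideal_gen_def)
  have "x + y = (\<Sum>g\<in>G. (a g + b g) * g)"
    by (simp add: a b distrib_right sum.distrib)
  then show ?thesis
    using a b unfolding ideal_gen_def by (intro CollectI exI[of _ "\<lambda>g. a g + b g"]) (auto intro: polyring_add)
qed

lemma ideal_gen_mult:
  assumes "x \<in> ideal_gen (polyring m n r) G" "p \<in> polyring m n r"
  shows "p * x \<in> ideal_gen (polyring m n r) G"
proof -
  obtain a where a: "\<forall>g\<in>G. a g \<in> polyring m n r" "x = (\<Sum>g\<in>G. a g * g)"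
    using assms by (auto simp: ideal_gen_def)
  have "p * x = (\<Sum>g\<in>G. (p * a g) * g)"
    by (simp add: a sum_distrib_left mult.assoc)
  then show ?thesis
    using a assms(2) unfolding ideal_gen_def by (intro CollectI exI[of _ "\<lambda>g. p * a g"]) (auto intro: polyring_mult)
qed

lemma generator_in_ideal_gen:
  assumes "finite G" "g \<in> G"
  shows "g \<in> ideal_gen (polyring m n r) G"
proof -
  have "(\<Sum>h\<in>G. (if h = g then 1 else 0) * h) = g"
    using assms by (simp add: if_distrib[of "\<lambda>c. c * _"] cong: if_cong)
  moreover have "\<forall>h\<in>G. (if h = g then 1 else 0) \<in> polyring m n r"
    by (simp add: polyring_zero polyring_one)
  ultimately show ?thesis
    unfolding ideal_gen_def by (intro CollectI exI[of _ "\<lambda>h. if h = g then 1 else 0"]) simp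
qed

lemma subspace_ideal_gen: "poly_vs.subspace (ideal_gen (polyring m n r) G)"
proof (rule poly_vs.subspaceI)
  show "0 \<in> ideal_gen (polyring m n r) G"
    unfolding ideal_gen_def by (intro CollectI exI[of _ "\<lambda>_. 0"]) (simp add: polyring_zero)
qed (auto simp: kscale_def intro: ideal_gen_add ideal_gen_mult polyring_constant)

lemma finite_minors_gens: "finite (minors_gens m n r :: 'k::field mpoly set)"
proof -
  let ?S = "({1..m} \<times> {1..m}) \<times> ({1..n} \<times> {1..n}) \<times> ({1..r} \<times> {1..r})"
  let ?h = "\<lambda>((i, i'), (j, j'), (k, k')). Var i j k * Var i' j' k' - Var i j' k' * Var i' j k :: 'k mpoly"
  let ?v = "\<lambda>((i, i'), (j, j'), (k, k')). Var i j k * Var i' j' k' - Var i j' k * Var i' j k' :: 'k mpoly"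
  have "minors_gens m n r \<subseteq> ?h ` ?S \<union> ?v ` ?S"
    unfolding minors_gens_def
  proof (intro subsetI, elim UnE CollectE exE conjE)
    fix g :: "'k mpoly" and i i' j j' k k'
    assume "g = Var i j k * Var i' j' k' - Var i j' k' * Var i' j k"
      "i \<in> {1..m}" "i' \<in> {1..m}" "j \<in> {1..n}" "j' \<in> {1..n}" "k \<in> {1..r}" "k' \<in> {1..r}"
    then show "g \<in> ?h ` ?S \<union> ?v ` ?S"
      by (intro UnI1 rev_image_eqI[of "((i, i'), (j, j'), (k, k'))"]) simp_all
  next
    fix g :: "'k mpoly" and i i' j j' k k'
    assume "g = Var i j k * Var i' j' k' - Var i j' k * Var i' j k'"
      "i \<in> {1..m}" "i' \<in> {1..m}" "j \<in> {1..n}" "j' \<in> {1..n}" "k \<in> {1..r}" "k' \<in> {1..r}"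
    then show "g \<in> ?h ` ?S \<union> ?v ` ?S"
      by (intro UnI2 rev_image_eqI[of "((i, i'), (j, j'), (k, k'))"]) simp_all
  qed
  then show ?thesis
    by (rule finite_subset) simp
qed

lemma Imnr_add: "x \<in> Imnr m n r \<Longrightarrow> y \<in> Imnr m n r \<Longrightarrow> x + y \<in> Imnr m n r"
  unfolding Imnr_def by (rule ideal_gen_add)

lemma Imnr_mult: "x \<in> Imnr m n r \<Longrightarrow> p \<in> polyring m n r \<Longrightarrow> p * x \<in> Imnr m n r"
  unfolding Imnr_def by (rule ideal_gen_mult)

lemma subspace_Imnr: "poly_vs.subspace (Imnr m n r)"
  unfolding Imnr_def by (rule subspace_ideal_gen)

lemma Imnr_zero: "0 \<in> Imnr m n r"
  by (rule poly_vs.subspace_0[OF subspace_Imnr])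

lemma Imnr_diff_trans: "a - b \<in> Imnr m n r \<Longrightarrow> b - c \<in> Imnr m n r \<Longrightarrow> a - c \<in> Imnr m n r"
  using Imnr_add[of "a - b" m n r "b - c"] by simp

definition mset_of_pm :: "('a \<Rightarrow>\<^sub>0 nat) \<Rightarrow> 'a multiset" where
  "mset_of_pm \<alpha> = Abs_multiset (Poly_Mapping.lookup \<alpha>)"

definition pm_of_mset :: "'a multiset \<Rightarrow> 'a \<Rightarrow>\<^sub>0 nat" where
  "pm_of_mset M = Abs_poly_mapping (count M)"

lemma count_mset_of_pm [simp]: "count (mset_of_pm \<alpha>) x = Poly_Mapping.lookup \<alpha> x"
  unfolding mset_of_pm_def by (subst count_Abs_multiset) simp_all

lemma lookup_pm_of_mset [simp]: "Poly_Mapping.lookup (pm_of_mset M) x = count M x"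
proof -
  have "{x. count M x \<noteq> 0} = set_mset M"
    by auto
  then show ?thesis
    unfolding pm_of_mset_def by (simp add: Abs_poly_mapping_inverse)
qed

lemma pm_of_mset_of_pm [simp]: "pm_of_mset (mset_of_pm \<alpha>) = \<alpha>"
  by (rule poly_mapping_eqI) simp

lemma mset_of_pm_of_mset [simp]: "mset_of_pm (pm_of_mset M) = M"
  by (simp add: multiset_eq_iff)

lemma pm_of_mset_union: "pm_of_mset (M + N) = pm_of_mset M + pm_of_mset N"
  by (rule poly_mapping_eqI) (simp add: lookup_add)

lemma mset_of_pm_add: "mset_of_pm (\<alpha> + \<beta>) = mset_of_pm \<alpha> + mset_of_pm \<beta>"
  by (simp add: multiset_eq_iff lookup_add)

lemma set_mset_mset_of_pm: "set_mset (mset_of_pm \<alpha>) = Poly_Mapping.keys \<alpha>"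
proof -
  have "x \<in># mset_of_pm \<alpha> \<longleftrightarrow> x \<in> Poly_Mapping.keys \<alpha>" for x
    using count_greater_zero_iff[of "mset_of_pm \<alpha>" x] by (simp add: in_keys_iff)
  then show ?thesis
    by blast
qed

lemma size_mset_of_pm: "size (mset_of_pm \<alpha>) = mdeg \<alpha>"
  by (simp add: mdeg_def size_multiset_overloaded_eq set_mset_mset_of_pm)

definition var_prod :: "var multiset \<Rightarrow> 'k::field mpoly" where
  "var_prod M = monomial (pm_of_mset M)"

lemma var_prod_union: "var_prod (M + N) = var_prod M * var_prod N"
  by (simp add: var_prod_def pm_of_mset_union monomial_mult)

lemma var_prod_singleton: "var_prod {#(i, j, k)#} = Var i j k"
proof -
  have "pm_of_mset {#(i, j, k)#} = Poly_Mapping.single (i, j, k) 1"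
    by (rule poly_mapping_eqI) (simp add: lookup_single when_def)
  then show ?thesis
    by (simp add: var_prod_def Var_def monomial_def)
qed

lemma var_prod_pair: "var_prod {#(i, j, k), (i', j', k')#} = Var i j k * Var i' j' k'"
  using var_prod_union[of "{#(i, j, k)#}" "{#(i', j', k')#}"] by (simp add: var_prod_singleton add_mset_commute)

lemma var_prod_in_polyring: "set_mset M \<subseteq> vars_set m n r \<Longrightarrow> var_prod M \<in> polyring m n r"
  by (simp add: var_prod_def polyring_monomial flip: set_mset_mset_of_pm)

definition content :: "var multiset \<Rightarrow> nat multiset \<times> nat multiset \<times> nat multiset" where
  "content M = (image_mset fst M, image_mset (\<lambda>v. fst (snd v)) M, image_mset (\<lambda>v. snd (snd v)) M)"

lemma content_exchange:
  assumes "X \<subseteq># M" "content X = content Y"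
  shows "content (M - X + Y) = content M"
proof -
  have "image_mset f (M - X + Y) = image_mset f M" if "image_mset f X = image_mset f Y" for f :: "var \<Rightarrow> nat"
  proof -
    have "image_mset f (M - X + Y) = image_mset f M - image_mset f X + image_mset f X"
      by (simp only: image_mset_union image_mset_Diff[OF assms(1)] that)
    also have "\<dots> = image_mset f M"
      using image_mset_subseteq_mono[OF assms(1)] by (rule subset_mset.diff_add)
    finally show ?thesis .
  qed
  then show ?thesis
    using assms(2) by (simp add: content_def)
qed

lemma size_eq_if_content_eq: "content M = content N \<Longrightarrow> size M = size N"
  unfolding content_def by (metis prod.inject size_image_mset)

section \<open>Congruence of monomials modulo the ideal\<close>

lemma var_prod_swap_in_Imnr:
  assumes "(i, j, k) \<in> vars_set m n r" "(i', j', k') \<in> vars_set m n r"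
  shows var_prod_swap_jk_in_Imnr:
      "(var_prod {#(i, j, k), (i', j', k')#} - var_prod {#(i, j', k'), (i', j, k)#} :: 'k::field mpoly)
         \<in> Imnr m n r"
    and var_prod_swap_j_in_Imnr:
      "(var_prod {#(i, j, k), (i', j', k')#} - var_prod {#(i, j', k), (i', j, k')#} :: 'k::field mpoly)
         \<in> Imnr m n r"
proof -
  have "i \<in> {1..m}" "i' \<in> {1..m}" "j \<in> {1..n}" "j' \<in> {1..n}" "k \<in> {1..r}" "k' \<in> {1..r}"
    using assms by (simp_all add: vars_set_def)
  then show "(var_prod {#(i, j, k), (i', j', k')#} - var_prod {#(i, j', k'), (i', j, k)#} :: 'k mpoly) \<in> Imnr m n r"
    and "(var_prod {#(i, j, k), (i', j', k')#} - var_prod {#(i, j', k), (i', j, k')#} :: 'k mpoly) \<in> Imnr m n r"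
    unfolding Imnr_def var_prod_pair
    by (intro generator_in_ideal_gen finite_minors_gens; unfold minors_gens_def; blast)+
qed

lemma var_prod_exchange_in_Imnr:
  assumes "set_mset M \<subseteq> vars_set m n r" "X \<subseteq># M" "(var_prod X - var_prod Y :: 'k::field mpoly) \<in> Imnr m n r"
  shows "(var_prod M - var_prod (M - X + Y) :: 'k mpoly) \<in> Imnr m n r"
proof -
  have "var_prod M = (var_prod (M - X + X) :: 'k mpoly)"
    using assms(2) by simp
  then have "var_prod M - var_prod (M - X + Y) = (var_prod (M - X) * (var_prod X - var_prod Y) :: 'k mpoly)"
    by (simp only: var_prod_union right_diff_distrib)
  moreover have "set_mset (M - X) \<subseteq> vars_set m n r"
    using assms(1) by (meson in_diffD subset_iff)
  ultimately show ?thesis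
    using Imnr_mult[OF assms(3) var_prod_in_polyring] by simp
qed

lemma exchange_in_Imnr:
  assumes M: "set_mset M \<subseteq> vars_set m n r" and X: "X \<subseteq># M" and Y: "set_mset Y \<subseteq> vars_set m n r"
    and XY: "content X = content Y" "(var_prod X - var_prod Y :: 'k::field mpoly) \<in> Imnr m n r"
  shows "(var_prod M - var_prod (M - X + Y) :: 'k mpoly) \<in> Imnr m n r"
    and "content (M - X + Y) = content M" and "set_mset (M - X + Y) \<subseteq> vars_set m n r"
  using var_prod_exchange_in_Imnr[OF M X XY(2)] content_exchange[OF X XY(1)] M Y by (auto dest: in_diffD)

lemma exists_congruent_containing_column:
  assumes M: "set_mset M \<subseteq> vars_set m n r" and "(i, j', k) \<in># M" "(i', j, k') \<in># M"
  obtains M1 where "(var_prod M - var_prod M1 :: 'k::field mpoly) \<in> Imnr m n r"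
    "content M1 = content M" "set_mset M1 \<subseteq> vars_set m n r" "(i, j, k) \<in># M1"
proof (cases "j' = j")
  case True
  then show ?thesis
    using assms by (intro that[of M]) (simp_all add: Imnr_zero)
next
  case False
  let ?X = "{#(i, j', k), (i', j, k')#}" and ?Y = "{#(i, j, k), (i', j', k')#}"
  have X: "?X \<subseteq># M"
    using assms False by (simp add: insert_subset_eq_iff in_diff_count)
  have vars: "(i, j', k) \<in> vars_set m n r" "(i', j, k') \<in> vars_set m n r"
    using assms by auto
  then have "set_mset ?Y \<subseteq> vars_set m n r"
    by (auto simp: vars_set_def)
  moreover have "content ?X = content ?Y"
    by (simp add: content_def)
  moreover have "(var_prod ?X - var_prod ?Y :: 'k mpoly) \<in> Imnr m n r"
    using var_prod_swap_j_in_Imnr[OF vars] .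
  ultimately have "(var_prod M - var_prod (M - ?X + ?Y) :: 'k mpoly) \<in> Imnr m n r"
    "content (M - ?X + ?Y) = content M" "set_mset (M - ?X + ?Y) \<subseteq> vars_set m n r"
    by (rule exchange_in_Imnr[OF M X])+
  then show ?thesis
    by (rule that) simp
qed

(* Horizontal minors exchange (column, matrix) index pairs and vertical minors exchange column
   indices, so composing the two exchanges matrix indices alone. *)
lemma exists_congruent_containing_slice:
  assumes M: "set_mset M \<subseteq> vars_set m n r" and "(i, j, k') \<in># M" "(i', j', k) \<in># M"
  obtains M1 where "(var_prod M - var_prod M1 :: 'k::field mpoly) \<in> Imnr m n r"
    "content M1 = content M" "set_mset M1 \<subseteq> vars_set m n r" "(i, j, k) \<in># M1"
proof (cases "k' = k")
  case True
  then show ?thesis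
    using assms by (intro that[of M]) (simp_all add: Imnr_zero)
next
  case False
  let ?X = "{#(i, j, k'), (i', j', k)#}" and ?Y = "{#(i, j, k), (i', j', k')#}"
  have X: "?X \<subseteq># M"
    using assms False by (simp add: insert_subset_eq_iff in_diff_count)
  have vars: "(i, j, k') \<in> vars_set m n r" "(i', j', k) \<in> vars_set m n r"
    using assms by auto
  then have vars': "(i, j', k) \<in> vars_set m n r" "(i', j, k') \<in> vars_set m n r"
    by (auto simp: vars_set_def)
  have "set_mset ?Y \<subseteq> vars_set m n r"
    using vars by (auto simp: vars_set_def)
  moreover have "content ?X = content ?Y"
    by (simp add: content_def)
  moreover have "(var_prod ?X - var_prod ?Y :: 'k mpoly) \<in> Imnr m n r"
    using var_prod_swap_jk_in_Imnr[OF vars] var_prod_swap_j_in_Imnr[OF vars'] by (rule Imnr_diff_trans)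
  ultimately have "(var_prod M - var_prod (M - ?X + ?Y) :: 'k mpoly) \<in> Imnr m n r"
    "content (M - ?X + ?Y) = content M" "set_mset (M - ?X + ?Y) \<subseteq> vars_set m n r"
    by (rule exchange_in_Imnr[OF M X])+
  then show ?thesis
    by (rule that) simp
qed

lemma exists_congruent_containing:
  assumes M: "set_mset M \<subseteq> vars_set m n r" and content: "content M = content N" and ijk: "(i, j, k) \<in># N"
  obtains M' where "(var_prod M - var_prod M' :: 'k::field mpoly) \<in> Imnr m n r"
    "content M' = content M" "set_mset M' \<subseteq> vars_set m n r" "(i, j, k) \<in># M'"
proof -
  have in_N: "i \<in># image_mset fst N" "j \<in># image_mset (\<lambda>v. fst (snd v)) N"
    "k \<in># image_mset (\<lambda>v. snd (snd v)) N"
    using multi_member_split[OF ijk] by auto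
  then have "i \<in># image_mset fst M" "j \<in># image_mset (\<lambda>v. fst (snd v)) M"
    using content by (simp_all add: content_def)
  then obtain j1 k1 i2 k2 where "(i, j1, k1) \<in># M" "(i2, j, k2) \<in># M"
    by (metis (no_types, lifting) imageE prod.collapse set_image_mset)
  then obtain M1 where M1: "(var_prod M - var_prod M1 :: 'k mpoly) \<in> Imnr m n r" "content M1 = content M"
    "set_mset M1 \<subseteq> vars_set m n r" "(i, j, k1) \<in># M1"
    using exists_congruent_containing_column[OF M] by blast
  have "k \<in># image_mset (\<lambda>v. snd (snd v)) M1"
    using in_N content M1(2) by (simp add: content_def)
  then obtain i3 j3 where "(i3, j3, k) \<in># M1"
    by auto
  then obtain M' where M': "(var_prod M1 - var_prod M' :: 'k mpoly) \<in> Imnr m n r" "content M' = content M1"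
    "set_mset M' \<subseteq> vars_set m n r" "(i, j, k) \<in># M'"
    using exists_congruent_containing_slice[OF M1(3,4)] by blast
  show ?thesis
    using Imnr_diff_trans[OF M1(1) M'(1)] M'(2-4) M1(2) by (intro that[of M']) simp_all
qed

lemma var_prod_diff_in_Imnr_if_content_eq:
  assumes "set_mset M \<subseteq> vars_set m n r" "set_mset N \<subseteq> vars_set m n r" "content M = content N"
  shows "(var_prod M - var_prod N :: 'k::field mpoly) \<in> Imnr m n r"
  using assms
proof (induction "size N" arbitrary: M N)
  case 0
  then have "M = {#}" "N = {#}"
    using size_eq_if_content_eq[OF "0.prems"(3)] by simp_all
  then show ?case
    by (simp add: Imnr_zero)
next
  case (Suc d)
  then obtain v N' where N: "N = add_mset v N'"
    by (metis size_eq_Suc_imp_eq_union)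
  obtain i j k where v: "v = (i, j, k)"
    by (cases v) auto
  have "(i, j, k) \<in># N"
    using N v by simp
  then obtain M' where M': "(var_prod M - var_prod M' :: 'k mpoly) \<in> Imnr m n r"
    "content M' = content M" "set_mset M' \<subseteq> vars_set m n r" "v \<in># M'"
    using exists_congruent_containing[OF Suc.prems(1,3)] v by blast
  then obtain M'' where M'': "M' = add_mset v M''"
    by (metis multi_member_split)
  have "content M'' = content N'"
    using M'(2) Suc.prems(3) unfolding M'' N by (simp add: content_def)
  moreover have "d = size N'" "set_mset M'' \<subseteq> vars_set m n r" "set_mset N' \<subseteq> vars_set m n r"
    using Suc.hyps(2) M'(3) Suc.prems(2) unfolding M'' N by simp_all
  ultimately have "(var_prod M'' - var_prod N' :: 'k mpoly) \<in> Imnr m n r"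
    using Suc.hyps(1) by blast
  then have "(var_prod M' - var_prod N :: 'k mpoly) \<in> Imnr m n r"
    using var_prod_exchange_in_Imnr[of "add_mset v M''" m n r "M''" "N'"] M'(3) unfolding M'' N by simp
  then show ?case
    using Imnr_diff_trans[OF M'(1)] by blast
qed

definition coeff_sum :: "(exponent \<Rightarrow> bool) \<Rightarrow> 'k::field mpoly \<Rightarrow> 'k" where
  "coeff_sum P p = (\<Sum>\<alpha>\<in>{\<alpha>\<in>Poly_Mapping.keys p. P \<alpha>}. Poly_Mapping.lookup p \<alpha>)"

lemma coeff_sum_superset:
  assumes "finite S" "Poly_Mapping.keys p \<subseteq> S"
  shows "coeff_sum P p = (\<Sum>\<alpha>\<in>{\<alpha>\<in>S. P \<alpha>}. Poly_Mapping.lookup p \<alpha>)"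
  unfolding coeff_sum_def using assms by (intro sum.mono_neutral_left) (auto simp: in_keys_iff)

lemma coeff_sum_add: "coeff_sum P (p + q) = coeff_sum P p + coeff_sum P q"
proof -
  let ?S = "Poly_Mapping.keys p \<union> Poly_Mapping.keys q"
  have "Poly_Mapping.keys (p + q) \<subseteq> ?S"
    by (rule keys_add)
  then show ?thesis
    by (simp add: coeff_sum_superset[of ?S] lookup_add sum.distrib)
qed

lemma coeff_sum_diff: "coeff_sum P (p - q) = coeff_sum P p - coeff_sum P q"
  using coeff_sum_add[of P "p - q" q] by simp

lemma coeff_sum_zero [simp]: "coeff_sum P 0 = 0"
  by (simp add: coeff_sum_def)

lemma coeff_sum_sum: "coeff_sum P (\<Sum>x\<in>A. f x) = (\<Sum>x\<in>A. coeff_sum P (f x))"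
  by (induction A rule: infinite_finite_induct) (simp_all add: coeff_sum_add)

lemma coeff_sum_single: "coeff_sum P (Poly_Mapping.single \<gamma> c) = (if P \<gamma> then c else 0)"
  by (simp add: coeff_sum_superset[of "{\<gamma>}"] Collect_conj_eq)

lemma coeff_sum_mult_binomial:
  assumes "\<And>\<beta>. P (\<beta> + a) \<longleftrightarrow> P (\<beta> + b)"
  shows "coeff_sum P (q * (monomial a - monomial b)) = 0"
proof -
  have "q * (monomial a - monomial b) =
      (\<Sum>\<beta>\<in>Poly_Mapping.keys q. Poly_Mapping.single (\<beta> + a) (Poly_Mapping.lookup q \<beta>)
        - Poly_Mapping.single (\<beta> + b) (Poly_Mapping.lookup q \<beta>))"
    by (subst poly_eq_sum_monomials[of q])
      (simp add: kscale_def monomial_def mult_single sum_distrib_right right_diff_distrib sum_subtractf)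
  then show ?thesis
    by (simp add: coeff_sum_sum coeff_sum_diff coeff_sum_single assms)
qed

lemma minors_gens_content:
  assumes "g \<in> minors_gens m n r"
  obtains X Y where "g = var_prod X - var_prod Y" "content X = content Y"
  using assms unfolding minors_gens_def
proof (elim UnE CollectE exE conjE)
  fix i i' j j' k k'
  assume "g = Var i j k * Var i' j' k' - Var i j' k' * Var i' j k"
  then have "g = var_prod {#(i, j, k), (i', j', k')#} - var_prod {#(i, j', k'), (i', j, k)#}"
    by (simp add: var_prod_pair)
  moreover have "content {#(i, j, k), (i', j', k')#} = content {#(i, j', k'), (i', j, k)#}"
    by (simp add: content_def add_mset_commute)
  ultimately show thesis
    by (rule that)
next
  fix i i' j j' k k'
  assume "g = Var i j k * Var i' j' k' - Var i j' k * Var i' j k'"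
  then have "g = var_prod {#(i, j, k), (i', j', k')#} - var_prod {#(i, j', k), (i', j, k')#}"
    by (simp add: var_prod_pair)
  moreover have "content {#(i, j, k), (i', j', k')#} = content {#(i, j', k), (i', j, k')#}"
    by (simp add: content_def add_mset_commute)
  ultimately show thesis
    by (rule that)
qed

lemma coeff_sum_content_eq_0_if_in_Imnr:
  assumes "p \<in> Imnr m n r"
  shows "coeff_sum (\<lambda>\<alpha>. content (mset_of_pm \<alpha>) = c) p = 0"
proof -
  obtain a where p: "p = (\<Sum>g\<in>minors_gens m n r. a g * g)"
    using assms by (auto simp: Imnr_def ideal_gen_def)
  have "coeff_sum (\<lambda>\<alpha>. content (mset_of_pm \<alpha>) = c) (a g * g) = 0" if gen: "g \<in> minors_gens m n r" for g
  proof -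
    obtain X Y where g: "g = var_prod X - var_prod Y" and XY: "content X = content Y"
      using minors_gens_content[OF gen] .
    have "content (mset_of_pm \<beta> + X) = content (mset_of_pm \<beta> + Y)" for \<beta>
      using XY by (simp add: content_def)
    then show ?thesis
      unfolding g var_prod_def by (intro coeff_sum_mult_binomial) (simp add: mset_of_pm_add)
  qed
  then show ?thesis
    by (simp add: p coeff_sum_sum)
qed

section \<open>The Hilbert function\<close>

definition exps_of_degree :: "nat \<Rightarrow> nat \<Rightarrow> nat \<Rightarrow> nat \<Rightarrow> exponent set" where
  "exps_of_degree m n r d = {\<alpha>. Poly_Mapping.keys \<alpha> \<subseteq> vars_set m n r \<and> mdeg \<alpha> = d}"

lemma exps_of_degree_eq_image:
  "exps_of_degree m n r d = pm_of_mset ` multisets_of_size (vars_set m n r) d"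
proof -
  have char: "\<alpha> \<in> exps_of_degree m n r d \<longleftrightarrow> mset_of_pm \<alpha> \<in> multisets_of_size (vars_set m n r) d" for \<alpha>
    by (simp add: exps_of_degree_def multisets_of_size_def set_mset_mset_of_pm size_mset_of_pm)
  show ?thesis
  proof (intro set_eqI iffI)
    fix \<alpha>
    assume "\<alpha> \<in> exps_of_degree m n r d"
    then show "\<alpha> \<in> pm_of_mset ` multisets_of_size (vars_set m n r) d"
      using char by (intro image_eqI[of _ _ "mset_of_pm \<alpha>"]) simp_all
  next
    fix \<alpha>
    assume "\<alpha> \<in> pm_of_mset ` multisets_of_size (vars_set m n r) d"
    then obtain M where "M \<in> multisets_of_size (vars_set m n r) d" "\<alpha> = pm_of_mset M"
      by blast
    then show "\<alpha> \<in> exps_of_degree m n r d"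
      using char[of \<alpha>] by simp
  qed
qed

lemma finite_exps_of_degree: "finite (exps_of_degree m n r d)"
  by (simp add: exps_of_degree_eq_image finite_multisets_of_size vars_set_def)

lemma homog_eq: "homog m n r d = {p. Poly_Mapping.keys p \<subseteq> exps_of_degree m n r d}"
  by (auto simp: homog_def polyring_def exps_of_degree_def)

lemma subspace_homog: "poly_vs.subspace (homog m n r d)"
  unfolding homog_eq
  by (rule poly_vs.subspaceI) (auto dest: keys_add[THEN subsetD] simp: in_keys_iff)

lemma dim_homog: "poly_vs.dim (homog m n r d :: 'k::field mpoly set) = card (exps_of_degree m n r d)"
proof -
  let ?B = "monomial ` exps_of_degree m n r d :: 'k mpoly set"
  have "homog m n r d \<subseteq> poly_vs.span ?B"
  proof
    fix p :: "'k mpoly"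
    assume "p \<in> homog m n r d"
    then have "(\<Sum>\<alpha>\<in>Poly_Mapping.keys p. kscale (Poly_Mapping.lookup p \<alpha>) (monomial \<alpha>)) \<in> poly_vs.span ?B"
      by (intro poly_vs.span_sum poly_vs.span_scale poly_vs.span_base) (auto simp: homog_eq)
    then show "p \<in> poly_vs.span ?B"
      by (simp flip: poly_eq_sum_monomials)
  qed
  moreover have "?B \<subseteq> homog m n r d"
    by (auto simp: homog_eq monomial_def)
  ultimately have "poly_vs.span ?B = poly_vs.span (homog m n r d)"
    using poly_vs.span_superset[of "homog m n r d"] by (subst poly_vs.span_eq) blast
  then have "poly_vs.dim (homog m n r d :: 'k mpoly set) = card ?B"
    using independent_monomials[OF finite_exps_of_degree] by (intro poly_vs.dim_eq_card) simp_all
  then show ?thesis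
    by (simp add: card_image inj_on_subset[OF inj_monomial])
qed

lemma Imnr_inter_homog_eq:
  "Imnr m n r \<inter> homog m n r d =
    (balanced_polys (exps_of_degree m n r d) (\<lambda>\<alpha>. content (mset_of_pm \<alpha>)) :: 'k::field mpoly set)"
  (is "_ = balanced_polys ?A ?cl")
proof
  show "Imnr m n r \<inter> homog m n r d \<subseteq> (balanced_polys ?A ?cl :: 'k mpoly set)"
  proof
    fix p :: "'k mpoly"
    assume p: "p \<in> Imnr m n r \<inter> homog m n r d"
    then have keys: "Poly_Mapping.keys p \<subseteq> ?A"
      by (simp add: homog_eq)
    have "(\<Sum>\<beta>\<in>{\<beta>\<in>?A. ?cl \<beta> = ?cl \<alpha>}. Poly_Mapping.lookup p \<beta>) = 0" for \<alpha>
      using coeff_sum_content_eq_0_if_in_Imnr[of p m n r "?cl \<alpha>"] p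
      by (simp add: coeff_sum_superset[OF finite_exps_of_degree keys])
    then show "p \<in> balanced_polys ?A ?cl"
      using keys by (simp add: balanced_polys_def)
  qed
  have "(fibre_diff ?A ?cl \<alpha> :: 'k mpoly) \<in> Imnr m n r \<inter> homog m n r d" if \<alpha>: "\<alpha> \<in> ?A" for \<alpha>
  proof -
    let ?\<rho> = "fibre_rep ?A ?cl \<alpha>"
    have "?\<rho> \<in> ?A" "?cl ?\<rho> = ?cl \<alpha>"
      using fibre_rep_in[OF \<alpha>] fibre_rep_same_fibre[OF \<alpha>, of ?cl] by simp_all
    then have "(var_prod (mset_of_pm \<alpha>) - var_prod (mset_of_pm ?\<rho>) :: 'k mpoly) \<in> Imnr m n r"
      using \<alpha> by (intro var_prod_diff_in_Imnr_if_content_eq)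
        (simp_all add: exps_of_degree_def set_mset_mset_of_pm)
    moreover have "fibre_diff ?A ?cl \<alpha> \<in> (homog m n r d :: 'k mpoly set)"
      using \<alpha> \<open>?\<rho> \<in> ?A\<close> unfolding fibre_diff_def
      by (intro poly_vs.subspace_diff[OF subspace_homog]) (auto simp: homog_eq monomial_def)
    ultimately show ?thesis
      by (simp add: fibre_diff_def var_prod_def)
  qed
  then have "poly_vs.span (fibre_diff ?A ?cl ` (?A - fibre_rep ?A ?cl ` ?A)) \<subseteq> (Imnr m n r \<inter> homog m n r d :: 'k mpoly set)"
    by (intro poly_vs.span_minimal poly_vs.subspace_inter subspace_Imnr subspace_homog) auto
  then show "(balanced_polys ?A ?cl :: 'k mpoly set) \<subseteq> Imnr m n r \<inter> homog m n r d"
    by (simp add: span_fibre_diffs[OF finite_exps_of_degree])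
qed

lemma hilbert_fun_eq_card_contents:
  "hilbert_fun m n r K d = card (content ` multisets_of_size (vars_set m n r) d)"
proof -
  let ?A = "exps_of_degree m n r d" and ?cl = "\<lambda>\<alpha>. content (mset_of_pm \<alpha>)"
  have "hilbert_fun m n r K d = card ?A - (card ?A - card (?cl ` ?A))"
    by (simp add: hilbert_fun_def kdim_eq_dim dim_homog Imnr_inter_homog_eq
        dim_balanced_polys[OF finite_exps_of_degree])
  also have "\<dots> = card (?cl ` ?A)"
    using card_image_le[OF finite_exps_of_degree, of ?cl m n r d] by simp
  also have "?cl ` ?A = content ` multisets_of_size (vars_set m n r) d"
    by (simp add: exps_of_degree_eq_image image_image)
  finally show ?thesis .
qed

lemma pair_projections_multisets_of_size:
  "(\<lambda>M. (image_mset fst M, image_mset snd M)) ` multisets_of_size (A \<times> B) d =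
    multisets_of_size A d \<times> multisets_of_size B d"
proof (intro set_eqI iffI)
  fix XY
  assume "XY \<in> (\<lambda>M. (image_mset fst M, image_mset snd M)) ` multisets_of_size (A \<times> B) d"
  then obtain M where M: "set_mset M \<subseteq> A \<times> B" "size M = d" "XY = (image_mset fst M, image_mset snd M)"
    by (auto simp: multisets_of_size_def)
  then have "fst ` set_mset M \<subseteq> A" "snd ` set_mset M \<subseteq> B"
    by auto
  then show "XY \<in> multisets_of_size A d \<times> multisets_of_size B d"
    using M by (simp add: multisets_of_size_def)
next
  fix XY
  assume "XY \<in> multisets_of_size A d \<times> multisets_of_size B d"
  moreover obtain xs ys where "XY = (mset xs, mset ys)"
    using ex_mset by (metis prod.collapse)
  ultimately have XY: "XY = (mset xs, mset ys)" "set xs \<subseteq> A" "set ys \<subseteq> B" "length xs = d" "length ys = d"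
    by (simp_all add: multisets_of_size_def)
  have "mset (zip xs ys) \<in> multisets_of_size (A \<times> B) d"
    using XY by (auto simp: multisets_of_size_def dest: set_zip_leftD set_zip_rightD)
  moreover have "XY = (image_mset fst (mset (zip xs ys)), image_mset snd (mset (zip xs ys)))"
    using XY by (simp flip: mset_map)
  ultimately show "XY \<in> (\<lambda>M. (image_mset fst M, image_mset snd M)) ` multisets_of_size (A \<times> B) d"
    by blast
qed

lemma content_image_multisets_of_size:
  "content ` multisets_of_size (vars_set m n r) d =
    multisets_of_size {1..m} d \<times> multisets_of_size {1..n} d \<times> multisets_of_size {1..r} d"
proof -
  let ?split = "\<lambda>M. (image_mset fst M, image_mset snd M)"
  have "content = map_prod id ?split \<circ> ?split"
    by (simp add: fun_eq_iff content_def image_mset.compositionality comp_def)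
  then have "content ` multisets_of_size (vars_set m n r) d =
      map_prod id ?split ` ?split ` multisets_of_size ({1..m} \<times> {1..n} \<times> {1..r}) d"
    by (simp only: image_comp vars_set_def)
  also have "\<dots> = map_prod id ?split ` (multisets_of_size {1..m} d \<times> multisets_of_size ({1..n} \<times> {1..r}) d)"
    by (simp only: pair_projections_multisets_of_size)
  also have "\<dots> = multisets_of_size {1..m} d \<times> multisets_of_size {1..n} d \<times> multisets_of_size {1..r} d"
    by (rule map_prod_surj_on) (simp_all add: pair_projections_multisets_of_size)
  finally show ?thesis .
qed

lemma hilbert_fun_eq:
  "hilbert_fun m n r K d = ((m + d - 1) choose d) * ((n + d - 1) choose d) * ((r + d - 1) choose d)"
  by (simp add: hilbert_fun_eq_card_contents content_image_multisets_of_size card_cartesian_product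
      card_multisets_of_size)

section \<open>Sorted splittings of a word and descents\<close>

unbundle fps_syntax

definition sorted_splits :: "'a::linorder list \<Rightarrow> nat \<Rightarrow> 'a list list set" where
  "sorted_splits w d = {ps. length ps = Suc d \<and> concat ps = w \<and> (\<forall>p\<in>set ps. sorted p)}"

lemma finite_sorted_splits: "finite (sorted_splits w d)"
proof -
  let ?P = "{p. set p \<subseteq> set w \<and> length p \<le> length w}"
  have "p \<in> set ps \<Longrightarrow> length p \<le> length (concat ps)" for p :: "'a list" and ps
    by (induction ps) auto
  then have "sorted_splits w d \<subseteq> {ps. set ps \<subseteq> ?P \<and> length ps = Suc d}"
    unfolding sorted_splits_def by fastforce
  moreover have "finite ?P"
    by (rule finite_lists_length_le) simp
  ultimately show ?thesis
    using finite_lists_length_eq finite_subset by blast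
qed

lemma sorted_splits_Nil: "sorted_splits [] d = {replicate (Suc d) []}"
proof -
  have "ps \<in> sorted_splits [] d \<longleftrightarrow> ps = replicate (Suc d) []" for ps :: "'a::linorder list list"
  proof
    assume "ps \<in> sorted_splits [] d"
    then have "length ps = Suc d" "\<forall>p\<in>set ps. p = []"
      unfolding sorted_splits_def by auto
    then show "ps = replicate (Suc d) []"
      by (metis replicate_length_same)
  qed (simp add: sorted_splits_def)
  then show ?thesis
    by blast
qed

lemma card_sorted_splits_0: "card (sorted_splits w 0) = (if sorted w then 1 else 0)"
proof -
  have "sorted_splits w 0 = (if sorted w then {[w]} else {})"
    by (auto simp: sorted_splits_def length_Suc_conv)
  then show ?thesis
    by simp
qed

lemma sorted_Cons_iff_hd: "sorted (x # w) \<longleftrightarrow> sorted w \<and> (w = [] \<or> x \<le> hd w)"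
  by (cases w) auto

lemma sorted_splits_Cons_Suc:
  "sorted_splits (x # w) (Suc d) = Cons [] ` sorted_splits (x # w) d \<union>
     (\<lambda>qs. (x # hd qs) # tl qs) ` {qs \<in> sorted_splits w (Suc d). hd qs = [] \<or> x \<le> hd (hd qs)}"
  (is "?L = ?A \<union> ?B")
proof (intro set_eqI iffI)
  fix ps
  assume "ps \<in> ?L"
  then obtain p rest where ps: "ps = p # rest" "length rest = Suc d" "p @ concat rest = x # w"
    "sorted p" "\<forall>q\<in>set rest. sorted q"
    unfolding sorted_splits_def by (cases ps) auto
  show "ps \<in> ?A \<union> ?B"
  proof (cases p)
    case Nil
    then show ?thesis
      using ps by (auto simp: sorted_splits_def)
  next
    case (Cons y p')
    then have "p' # rest \<in> {qs \<in> sorted_splits w (Suc d). hd qs = [] \<or> x \<le> hd (hd qs)}" "ps = (x # p') # rest"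
      using ps by (auto simp: sorted_splits_def sorted_Cons_iff_hd simp del: sorted_wrt.simps)
    then show ?thesis
      by (intro UnI2 image_eqI[of _ _ "p' # rest"]) simp_all
  qed
next
  fix ps
  assume "ps \<in> ?A \<union> ?B"
  then show "ps \<in> ?L"
  proof
    assume "ps \<in> ?B"
    then obtain qs where qs: "qs \<in> sorted_splits w (Suc d)" "hd qs = [] \<or> x \<le> hd (hd qs)"
      and ps: "ps = (x # hd qs) # tl qs"
      by blast
    moreover obtain q rest where "qs = q # rest"
      using qs unfolding sorted_splits_def by (cases qs) auto
    ultimately show ?thesis
      by (auto simp: sorted_splits_def sorted_Cons_iff_hd simp del: sorted_wrt.simps)
  qed (auto simp: sorted_splits_def)
qed

(* The first block of a splitting of a nonempty w is empty or starts with hd w; dropping an empty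
   first block leaves a splitting into one block fewer. *)
lemma card_sorted_splits_first_block:
  "card {qs \<in> sorted_splits w (Suc d). hd qs = [] \<or> x \<le> hd (hd qs)} =
     (if w = [] then 1 else if x \<le> hd w then card (sorted_splits w (Suc d)) else card (sorted_splits w d))"
  (is "card ?B = _")
proof (cases w)
  case Nil
  then have "?B = sorted_splits w (Suc d)"
    by (auto simp: sorted_splits_Nil)
  then show ?thesis
    using Nil by (simp add: sorted_splits_Nil)
next
  case (Cons y w')
  have first_block: "hd qs = [] \<or> hd (hd qs) = y" if "qs \<in> sorted_splits w (Suc d)" for qs
    using that Cons unfolding sorted_splits_def by (cases qs; cases "hd qs") auto
  show ?thesis
  proof (cases "x \<le> y")
    case True
    then have "?B = sorted_splits w (Suc d)"
      using first_block by auto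
    then show ?thesis
      using Cons True by simp
  next
    case False
    then have "?B = {qs \<in> sorted_splits w (Suc d). hd qs = []}"
      using first_block by auto
    also have "\<dots> = Cons [] ` sorted_splits w d"
      unfolding sorted_splits_def by (auto simp: length_Suc_conv)
    finally show ?thesis
      using Cons False by (simp add: card_image)
  qed
qed

lemma card_sorted_splits_Cons_Suc:
  "card (sorted_splits (x # w) (Suc d)) = card (sorted_splits (x # w) d) +
     (if w = [] then 1 else if x \<le> hd w then card (sorted_splits w (Suc d)) else card (sorted_splits w d))"
proof -
  let ?B = "{qs \<in> sorted_splits w (Suc d). hd qs = [] \<or> x \<le> hd (hd qs)}"
  have "inj_on (\<lambda>qs. (x # hd qs) # tl qs) ?B"
  proof (rule inj_onI)
    fix qs qs'
    assume "qs \<in> ?B" "qs' \<in> ?B" and eq: "(x # hd qs) # tl qs = (x # hd qs') # tl qs'"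
    then have "qs \<noteq> []" "qs' \<noteq> []"
      unfolding sorted_splits_def by auto
    with eq show "qs = qs'"
      by (metis list.inject list.collapse)
  qed
  then show ?thesis
    unfolding sorted_splits_Cons_Suc card_sorted_splits_first_block[symmetric]
    by (subst card_Un_disjoint) (auto simp: finite_sorted_splits card_image)
qed

definition splits_fps :: "'a::linorder list \<Rightarrow> int fps" where
  "splits_fps w = Abs_fps (\<lambda>d. int (card (sorted_splits w d)))"

lemma fps_mult_one_minus_X_nth:
  "(f * (1 - fps_X)) $ k = f $ k - (if k = 0 then 0 else f $ (k - 1))" for f :: "int fps"
  by (simp add: right_diff_distrib mult.commute[of _ fps_X])

lemma splits_fps_Nil_mult: "splits_fps [] * (1 - fps_X) = 1"
  by (rule fps_ext) (simp add: fps_mult_one_minus_X_nth splits_fps_def sorted_splits_Nil)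

lemma splits_fps_Cons_mult:
  "splits_fps (x # w) * (1 - fps_X) = (if w \<noteq> [] \<and> hd w < x then fps_X * splits_fps w else splits_fps w)"
proof (rule fps_ext)
  fix k
  show "(splits_fps (x # w) * (1 - fps_X)) $ k =
      (if w \<noteq> [] \<and> hd w < x then fps_X * splits_fps w else splits_fps w) $ k"
  proof (cases k)
    case 0
    have "sorted (x # w) \<longleftrightarrow> sorted w \<and> \<not> (w \<noteq> [] \<and> hd w < x)"
      by (auto simp: sorted_Cons_iff_hd simp del: sorted_wrt.simps)
    then show ?thesis
      using 0 by (simp add: fps_mult_one_minus_X_nth splits_fps_def card_sorted_splits_0)
  next
    case (Suc d)
    then show ?thesis
      by (auto simp: fps_mult_one_minus_X_nth splits_fps_def card_sorted_splits_Cons_Suc sorted_splits_Nil)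
  qed
qed

lemma des_Cons: "des (x # w) = des w + (if w \<noteq> [] \<and> hd w < x then 1 else 0)"
proof -
  let ?D = "\<lambda>\<sigma>::nat list. {k. Suc k < length \<sigma> \<and> \<sigma> ! k > \<sigma> ! Suc k}"
  have "?D (x # w) = (if w \<noteq> [] \<and> hd w < x then insert 0 (Suc ` ?D w) else Suc ` ?D w)"
  proof (rule set_eqI)
    fix k
    show "k \<in> ?D (x # w) \<longleftrightarrow> k \<in> (if w \<noteq> [] \<and> hd w < x then insert 0 (Suc ` ?D w) else Suc ` ?D w)"
      by (cases k; cases w) auto
  qed
  moreover have "finite (?D w)"
    by (rule finite_subset[of _ "{..<length w}"]) auto
  ultimately show ?thesis
    by (simp add: des_def card_image card_insert_if)
qed

lemma splits_fps_mult_power: "splits_fps w * (1 - fps_X) ^ Suc (length w) = fps_X ^ des w"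
proof (induction w)
  case Nil
  then show ?case
    by (simp add: splits_fps_Nil_mult des_def)
next
  case (Cons x w)
  define \<delta> where "\<delta> = (if w \<noteq> [] \<and> hd w < x then 1 else 0 :: nat)"
  have "splits_fps (x # w) * (1 - fps_X) ^ Suc (length (x # w)) =
      (splits_fps (x # w) * (1 - fps_X)) * (1 - fps_X) ^ Suc (length w)"
    by (simp add: mult.assoc)
  also have "\<dots> = fps_X ^ \<delta> * (splits_fps w * (1 - fps_X) ^ Suc (length w))"
    by (simp add: splits_fps_Cons_mult \<delta>_def mult.assoc)
  also have "\<dots> = fps_X ^ des (x # w)"
    by (subst Cons.IH) (simp add: des_Cons power_add \<delta>_def)
  finally show ?case .
qed

section \<open>Counting tuples of sorted words\<close>

definition words_with_counts :: "nat \<Rightarrow> nat \<Rightarrow> nat \<Rightarrow> nat list set" where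
  "words_with_counts a b c =
    {\<sigma>. set \<sigma> \<subseteq> {1, 2, 3} \<and> count_list \<sigma> 1 = a \<and> count_list \<sigma> 2 = b \<and> count_list \<sigma> 3 = c}"

lemma length_words_with_counts: "\<sigma> \<in> words_with_counts a b c \<Longrightarrow> length \<sigma> = a + b + c"
  by (simp add: words_with_counts_def flip: sum_count_set[of \<sigma> "{1, 2, 3}"])

lemma finite_words_with_counts: "finite (words_with_counts a b c)"
proof -
  have "words_with_counts a b c \<subseteq> {\<sigma>. set \<sigma> \<subseteq> {1, 2, 3} \<and> length \<sigma> = a + b + c}"
    using length_words_with_counts by (auto simp: words_with_counts_def)
  then show ?thesis
    by (rule finite_subset) (simp add: finite_lists_length_eq)
qed

lemma count_list_replicate: "count_list (replicate n x) y = (if x = y then n else 0)"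
  by (induction n) auto

definition sorted_word :: "nat \<Rightarrow> nat \<Rightarrow> nat \<Rightarrow> nat list" where
  "sorted_word x y z = replicate x 1 @ replicate y 2 @ replicate z 3"

lemma sorted_word_in_words_with_counts: "sorted_word x y z \<in> words_with_counts x y z"
  by (auto simp: sorted_word_def words_with_counts_def count_list_replicate)

lemma sorted_word_eq_iff: "sorted_word x y z = sorted_word x' y' z' \<longleftrightarrow> x = x' \<and> y = y' \<and> z = z'"
  using sorted_word_in_words_with_counts[of x y z] sorted_word_in_words_with_counts[of x' y' z']
  by (auto simp: words_with_counts_def)

lemma sorted_sorted_word: "sorted (sorted_word x y z)"
  by (auto simp: sorted_word_def sorted_append)

lemma sorted_word_unique:
  assumes "sorted p" "p \<in> words_with_counts x y z"
  shows "p = sorted_word x y z"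
  using assms
proof (induction p arbitrary: x y z)
  case Nil
  then show ?case
    by (simp add: sorted_word_def words_with_counts_def)
next
  case (Cons a p)
  then consider "a = 1" | "a = 2" | "a = 3"
    by (auto simp: words_with_counts_def)
  then show ?case
  proof cases
    case 1
    then show ?thesis
      using Cons.IH[of "x - 1" y z] Cons.prems by (auto simp: words_with_counts_def sorted_word_def)
  next
    case 2
    then have "1 \<notin> set p"
      using Cons.prems(1) by fastforce
    then show ?thesis
      using 2 Cons.IH[of 0 "y - 1" z] Cons.prems by (auto simp: words_with_counts_def sorted_word_def)
  next
    case 3
    then have "1 \<notin> set p" "2 \<notin> set p"
      using Cons.prems(1) by fastforce+
    then show ?thesis
      using 3 Cons.IH[of 0 0 "z - 1"] Cons.prems by (auto simp: words_with_counts_def sorted_word_def)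
  qed
qed

definition sorted_tuples :: "nat \<Rightarrow> nat \<Rightarrow> nat \<Rightarrow> nat \<Rightarrow> nat list list set" where
  "sorted_tuples a b c d =
    {ps. length ps = Suc d \<and> (\<forall>p\<in>set ps. sorted p) \<and> concat ps \<in> words_with_counts a b c}"

lemma sorted_tuples_eq_UN: "sorted_tuples a b c d = (\<Union>w\<in>words_with_counts a b c. sorted_splits w d)"
  by (auto simp: sorted_tuples_def sorted_splits_def)

lemma finite_sorted_tuples: "finite (sorted_tuples a b c d)"
  by (simp add: sorted_tuples_eq_UN finite_words_with_counts finite_sorted_splits)

lemma card_sorted_tuples_eq_sum:
  "card (sorted_tuples a b c d) = (\<Sum>w\<in>words_with_counts a b c. card (sorted_splits w d))"
proof -
  have "\<forall>w\<in>words_with_counts a b c. \<forall>w'\<in>words_with_counts a b c.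
      w \<noteq> w' \<longrightarrow> sorted_splits w d \<inter> sorted_splits w' d = {}"
    by (auto simp: sorted_splits_def)
  then show ?thesis
    by (simp add: sorted_tuples_eq_UN card_UN_disjoint finite_words_with_counts finite_sorted_splits)
qed

lemma sorted_tuples_0: "sorted_tuples a b c 0 = {[sorted_word a b c]}"
  by (auto simp: sorted_tuples_def length_Suc_conv sorted_sorted_word sorted_word_in_words_with_counts
      intro: sorted_word_unique)

lemma sorted_tuples_Suc:
  "sorted_tuples a b c (Suc d) =
    (\<lambda>(t, ps). sorted_word (fst t) (fst (snd t)) (snd (snd t)) # ps) `
      (SIGMA t:{..a} \<times> {..b} \<times> {..c}. sorted_tuples (a - fst t) (b - fst (snd t)) (c - snd (snd t)) d)"
  (is "?L = ?f ` ?S")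
proof
  show "?L \<subseteq> ?f ` ?S"
  proof
    fix ps
    assume ps: "ps \<in> ?L"
    then obtain p rest where ps_eq: "ps = p # rest"
      unfolding sorted_tuples_def by (cases ps) auto
    let ?t = "(count_list p 1, count_list p 2, count_list p 3)"
    have p: "sorted p" "set p \<subseteq> {1, 2, 3}" and rest: "\<forall>q\<in>set rest. sorted q" "length rest = Suc d"
      and "set (concat rest) \<subseteq> {1, 2, 3}"
      and counts: "count_list p 1 + count_list (concat rest) 1 = a" "count_list p 2 + count_list (concat rest) 2 = b"
        "count_list p 3 + count_list (concat rest) 3 = c"
      using ps ps_eq by (auto simp: sorted_tuples_def words_with_counts_def)
    then have "(?t, rest) \<in> ?S"
      by (auto simp: sorted_tuples_def words_with_counts_def)
    moreover have "ps = ?f (?t, rest)"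
      using p ps_eq by (simp add: sorted_word_unique words_with_counts_def)
    ultimately show "ps \<in> ?f ` ?S"
      by blast
  qed
  show "?f ` ?S \<subseteq> ?L"
    using sorted_sorted_word sorted_word_in_words_with_counts
    by (force simp: sorted_tuples_def words_with_counts_def sorted_word_def)
qed

lemma sum_choose_diff: "(\<Sum>x\<le>a. (a - x + d) choose (a - x)) = (a + Suc d) choose a"
proof -
  have "(\<Sum>x\<le>a. (a - x + d) choose (a - x)) = (\<Sum>x<Suc a. (\<lambda>k. (k + d) choose k) (Suc a - Suc x))"
    by (rule sum.cong) (auto simp: lessThan_Suc_atMost)
  also have "\<dots> = (\<Sum>k\<le>a. (d + k) choose k)"
    by (subst sum.nat_diff_reindex) (simp add: lessThan_Suc_atMost add.commute)
  also have "\<dots> = Suc (d + a) choose a"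
    by (rule sum_choose_lower)
  finally show ?thesis
    by (simp add: add.commute)
qed

lemma sum_cartesian_product3:
  "(\<Sum>t\<in>A \<times> B \<times> C. f (fst t) * g (fst (snd t)) * h (snd (snd t))) =
    sum f A * sum g B * (sum h C :: 'a::comm_semiring_0)"
proof -
  have "(\<Sum>t\<in>A \<times> B \<times> C. f (fst t) * g (fst (snd t)) * h (snd (snd t)))
      = (\<Sum>x\<in>A. \<Sum>u\<in>B \<times> C. f x * (g (fst u) * h (snd u)))"
    by (simp add: sum.cartesian_product split_def mult.assoc)
  also have "\<dots> = (\<Sum>x\<in>A. f x * (\<Sum>u\<in>B \<times> C. g (fst u) * h (snd u)))"
    by (simp add: sum_distrib_left)
  also have "(\<Sum>u\<in>B \<times> C. g (fst u) * h (snd u)) = sum g B * sum h C"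
    by (simp add: sum_product sum.cartesian_product split_def)
  finally show ?thesis
    by (simp add: sum_distrib_right mult.assoc)
qed

(* The occurrences of each letter are distributed independently over the d + 1 blocks. *)
lemma card_sorted_tuples:
  "card (sorted_tuples a b c d) = ((a + d) choose a) * ((b + d) choose b) * ((c + d) choose c)"
proof (induction d arbitrary: a b c)
  case 0
  then show ?case
    by (simp add: sorted_tuples_0)
next
  case (Suc d)
  let ?T = "{..a} \<times> {..b} \<times> {..c}"
  let ?f = "\<lambda>(t, ps). sorted_word (fst t) (fst (snd t)) (snd (snd t)) # ps"
  have "inj ?f"
    by (rule injI) (auto simp: sorted_word_eq_iff)
  then have "card (sorted_tuples a b c (Suc d)) =
      card (SIGMA t:?T. sorted_tuples (a - fst t) (b - fst (snd t)) (c - snd (snd t)) d)"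
    unfolding sorted_tuples_Suc by (rule card_image[OF inj_on_subset]) simp
  also have "\<dots> = (\<Sum>t\<in>?T. card (sorted_tuples (a - fst t) (b - fst (snd t)) (c - snd (snd t)) d))"
    by (rule card_SigmaI) (simp_all add: finite_sorted_tuples)
  also have "\<dots> = (\<Sum>x\<le>a. (a - x + d) choose (a - x)) * (\<Sum>y\<le>b. (b - y + d) choose (b - y))
      * (\<Sum>z\<le>c. (c - z + d) choose (c - z))"
    unfolding Suc.IH by (rule sum_cartesian_product3)
  also have "\<dots> = ((a + Suc d) choose a) * ((b + Suc d) choose b) * ((c + Suc d) choose c)"
    by (simp only: sum_choose_diff)
  finally show ?case .
qed

lemma sum_fps_X_power_des:
  assumes "finite W"
  shows "(\<Sum>w\<in>W. fps_X ^ des w :: int fps) = Abs_fps (\<lambda>k. int (card {w \<in> W. des w = k}))"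
proof (rule fps_ext)
  fix k
  have "(\<Sum>w\<in>W. fps_X ^ des w :: int fps) $ k = (\<Sum>w\<in>W. if k = des w then 1 else 0)"
    by (simp add: fps_sum_nth)
  also have "\<dots> = int (card {w \<in> W. des w = k})"
    using assms by (simp add: sum.If_cases eq_commute[of k] Collect_conj_eq)
  finally show "(\<Sum>w\<in>W. fps_X ^ des w :: int fps) $ k = Abs_fps (\<lambda>k. int (card {w \<in> W. des w = k})) $ k"
    by simp
qed

lemma descent_generating_function:
  "Abs_fps (\<lambda>d. int (((a + d) choose a) * ((b + d) choose b) * ((c + d) choose c))) * (1 - fps_X) ^ Suc (a + b + c)
    = Abs_fps (\<lambda>k. int (card {\<sigma> \<in> words_with_counts a b c. des \<sigma> = k}))"
proof -
  have "Abs_fps (\<lambda>d. int (((a + d) choose a) * ((b + d) choose b) * ((c + d) choose c))) =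
      (\<Sum>w\<in>words_with_counts a b c. splits_fps w)"
    by (rule fps_ext) (simp add: fps_sum_nth splits_fps_def card_sorted_tuples_eq_sum flip: card_sorted_tuples)
  then have "Abs_fps (\<lambda>d. int (((a + d) choose a) * ((b + d) choose b) * ((c + d) choose c))) * (1 - fps_X) ^ Suc (a + b + c)
      = (\<Sum>w\<in>words_with_counts a b c. splits_fps w * (1 - fps_X) ^ Suc (length w))"
    by (simp add: sum_distrib_right length_words_with_counts)
  also have "\<dots> = (\<Sum>w\<in>words_with_counts a b c. fps_X ^ des w)"
    by (intro sum.cong refl) (rule splits_fps_mult_power)
  finally show ?thesis
    by (simp add: sum_fps_X_power_des finite_words_with_counts)
qed

theorem corollary4p7:
  fixes K :: "'k::field itself" and m n r :: nat
  assumes "m \<ge> 1" and "n \<ge> 1" and "r \<ge> 1"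
  shows "\<exists>D::nat. hilbert_series m n r K * (1 - fps_X) ^ D = descent_poly m n r"
proof -
  have choose_eq: "(x + d - Suc 0) choose d = (x + d - Suc 0) choose (x - Suc 0)" if "x \<ge> 1" for x d :: nat
    using that binomial_symmetric[of d "x + d - 1"] by simp
  have hilbert: "hilbert_series m n r K =
      Abs_fps (\<lambda>d. int (((m - 1 + d) choose (m - 1)) * ((n - 1 + d) choose (n - 1)) * ((r - 1 + d) choose (r - 1))))"
    using assms by (simp add: hilbert_series_def hilbert_fun_eq choose_eq)
  have descent: "descent_poly m n r =
      Abs_fps (\<lambda>k. int (card {\<sigma> \<in> words_with_counts (m - 1) (n - 1) (r - 1). des \<sigma> = k}))"
    by (simp add: descent_poly_def words_SM_def words_with_counts_def)
  show ?thesis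
    unfolding hilbert descent using descent_generating_function by (rule exI)
qed

end
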